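(* For every $k\ge1$, the homomorphisms $\varphi_k\colon G_{k-1}\to\mathbb{Z}$ and $\psi_k\colon H_{k-1}\to\mathbb{Z}$ defined below are invariant under conjugation by $\mathbb{F}_2$: $\varphi_k(hgh^{-1})=\varphi_k(g)$ for all $g\in G_{k-1}$, $h\in\mathbb{F}_2$, and $\psi_k(hgh^{-1})=\psi_k(g)$ for all $g\in H_{k-1}$, $h\in\mathbb{F}_2$ (in particular $G_{k-1}$ and $H_{k-1}$ are normal in $\mathbb{F}_2$).
   Context: $\mathbb{F}_2$ is the free group on $x,y$. Let $\tilde K$ be the graph with vertex set $\mathbb{Z}^2$ and oriented edges $x^iy^jX$ from $(i,j)$ to $(i+1,j)$ and $x^iy^jY$ from $(i,j)$ to $(i,j+1)$. A $1$-chain is written $\alpha=P_\alpha(x,y)X+Q_\alpha(x,y)Y$ with $P_\alpha,Q_\alpha$ integer Laurent polynomials (coefficient of $x^iy^j$ in $P_\alpha$ = coefficient of edge $x^iy^jX$, similarly for $Q_\alpha$). For $g\in[\mathbb{F}_2,\mathbb{F}_2]$ written as a word in $x^{\pm1},y^{\pm1}$, the cycle $\alpha_g$ is the $1$-cycle traced by the lattice path from $(0,0)$ in which $x,x^{-1},y,y^{-1}$ move by $(1,0),(-1,0),(0,1),(0,-1)$ along the corresponding edges, each edge counted with sign $+1$ if traversed in its orientation and $-1$ otherwise; its homology class depends only on $g$. Put $f_g(y)=P_{\alpha_g}(1,y)$ and $g_g(x)=Q_{\alpha_g}(x,1)$. Set $G_0=H_0=[\mathbb{F}_2,\mathbb{F}_2]$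 and inductively, for $k\ge1$, $\varphi_k(g)=f_g^{(k)}(1)/k!$ for $g\in G_{k-1}$, $\psi_k(g)=g_g^{(k)}(1)/k!$ for $g\in H_{k-1}$ (integers, since the $k$th derivative of an integer Laurent polynomial is divisible by $k!$), $G_k=\ker\varphi_k$, $H_k=\ker\psi_k$. These $\varphi_k,\psi_k$ are group homomorphisms to $\mathbb{Z}$. *)

theory Defs
  imports "HOL-Analysis.Analysis"
begin

text \<open>Elements of the free group F2 on x, y are represented by words in
x, x^-1, y, y^-1. A letter is a generator together with a flag that is True
for the inverse letter.\<close>

datatype gen = Gx | Gy

type_synonym letter = "gen \<times> bool"
type_synonym word = "letter list"

definition flip :: "letter \<Rightarrow> letter" where
  "flip l = (fst l, \<not> snd l)"

definition winv :: "word \<Rightarrow> word" where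
  "winv w = rev (map flip w)"

definition wconj :: "word \<Rightarrow> word \<Rightarrow> word" where
  "wconj h g = h @ g @ winv h"

text \<open>Words representing elements of the commutator subgroup [F2,F2]:
the subgroup generated by commutators, closed under free reduction/insertion
of cancelling pairs (i.e. a union of classes of the free group).\<close>
inductive_set comm_words :: "word set" where
  empty: "[] \<in> comm_words"
| commutator: "u @ v @ winv u @ winv v \<in> comm_words"
| mult: "u \<in> comm_words \<Longrightarrow> v \<in> comm_words \<Longrightarrow> u @ v \<in> comm_words"
| inv: "u \<in> comm_words \<Longrightarrow> winv u \<in> comm_words"
| reduce: "a @ [l, flip l] @ b \<in> comm_words \<Longrightarrow> a @ b \<in> comm_words"
| expand: "a @ b \<in> comm_words \<Longrightarrow> a @ [l, flip l] @ b \<in> comm_words"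

fun step :: "letter \<Rightarrow> int \<times> int \<Rightarrow> int \<times> int" where
  "step (Gx, False) (i, j) = (i + 1, j)"
| "step (Gx, True) (i, j) = (i - 1, j)"
| "step (Gy, False) (i, j) = (i, j + 1)"
| "step (Gy, True) (i, j) = (i, j - 1)"

text \<open>Edges are (g, i, j): the edge x^i y^j X (g = Gx) from (i,j) to (i+1,j)
or x^i y^j Y (g = Gy) from (i,j) to (i,j+1). The edge traversed by a letter
from position p, and the sign of the traversal.\<close>
fun trav_edge :: "letter \<Rightarrow> int \<times> int \<Rightarrow> gen \<times> int \<times> int" where
  "trav_edge (Gx, False) (i, j) = (Gx, i, j)"
| "trav_edge (Gx, True) (i, j) = (Gx, i - 1, j)"
| "trav_edge (Gy, False) (i, j) = (Gy, i, j)"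
| "trav_edge (Gy, True) (i, j) = (Gy, i, j - 1)"

definition sign_of :: "letter \<Rightarrow> int" where
  "sign_of l = (if snd l then -1 else 1)"

fun chain_from :: "word \<Rightarrow> int \<times> int \<Rightarrow> gen \<times> int \<times> int \<Rightarrow> int" where
  "chain_from [] p = (\<lambda>e. 0)"
| "chain_from (l # w) p =
     (\<lambda>e. (if e = trav_edge l p then sign_of l else 0) + chain_from w (step l p) e)"

fun edges_from :: "word \<Rightarrow> int \<times> int \<Rightarrow> (gen \<times> int \<times> int) set" where
  "edges_from [] p = {}"
| "edges_from (l # w) p = insert (trav_edge l p) (edges_from w (step l p))"

definition alpha :: "word \<Rightarrow> gen \<times> int \<times> int \<Rightarrow> int" where
  "alpha w = chain_from w (0, 0)"

definition P_coeff :: "word \<Rightarrow> int \<Rightarrow> int \<Rightarrow> int" where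
  "P_coeff w i j = alpha w (Gx, i, j)"

definition Q_coeff :: "word \<Rightarrow> int \<Rightarrow> int \<Rightarrow> int" where
  "Q_coeff w i j = alpha w (Gy, i, j)"

text \<open>f_g(y) = P(1,y) = sum of P(i,j) y^j and g_g(x) = Q(x,1) = sum of Q(i,j) x^i,
as real functions (sums over the finite support of the chain).\<close>
definition f_poly :: "word \<Rightarrow> real \<Rightarrow> real" where
  "f_poly w y = (\<Sum>(i, j) \<in> {(i, j). (Gx, i, j) \<in> edges_from w (0, 0)}.
                   of_int (P_coeff w i j) * y powi j)"

definition g_poly :: "word \<Rightarrow> real \<Rightarrow> real" where
  "g_poly w x = (\<Sum>(i, j) \<in> {(i, j). (Gy, i, j) \<in> edges_from w (0, 0)}.
                   of_int (Q_coeff w i j) * x powi i)"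

definition phi :: "nat \<Rightarrow> word \<Rightarrow> real" where
  "phi k w = (deriv ^^ k) (f_poly w) 1 / fact k"

definition psi :: "nat \<Rightarrow> word \<Rightarrow> real" where
  "psi k w = (deriv ^^ k) (g_poly w) 1 / fact k"

fun G_set :: "nat \<Rightarrow> word set" where
  "G_set 0 = comm_words"
| "G_set (Suc k) = {w \<in> G_set k. phi (Suc k) w = 0}"

fun H_set :: "nat \<Rightarrow> word set" where
  "H_set 0 = comm_words"
| "H_set (Suc k) = {w \<in> H_set k. psi (Suc k) w = 0}"

end

theory Submission
  imports Defs "HOL-Computational_Algebra.Formal_Power_Series"
begin

(* Since g is a closed path, the path of h g h^-1 walks along h, traverses g translated by
   the endpoint (a, b) of h, and then cancels h. So alpha of the conjugate is alpha_g
   translated by (a, b), and f_{hgh^-1}(y) = y^b f_g(y). Now phi_k(g) is the k-th Taylor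
   coefficient of f_g at y = 1; for g in G_{k-1} the coefficients of order 1, ..., k-1
   vanish by assumption and the one of order 0 is the total x-displacement of g, which is 0.
   As y^b = 1 + O(y - 1), multiplying by y^b leaves the first nonvanishing coefficient
   unchanged (at the level of coefficients this is Vandermonde's identity). Applied to
   orders below k this also shows that G_{k-1} is closed under conjugation. The automorphism
   of F_2 exchanging x and y exchanges f and g, which reduces the statement for psi to the
   one for phi. *)

definition disp :: "letter \<Rightarrow> int \<times> int" where
  "disp l = step l (0, 0)"

definition word_disp :: "word \<Rightarrow> int \<times> int" where
  "word_disp w = sum_list (map disp w)"

lemma step_eq_add_disp: "step l p = p + disp l"
  by (cases l; cases p; cases "fst l"; cases "snd l") (auto simp: disp_def)

lemma disp_flip [simp]: "disp (flip l) = - disp l"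
  by (cases l; cases "fst l"; cases "snd l") (auto simp: disp_def flip_def)

lemma flip_flip [simp]: "flip (flip l) = l"
  by (simp add: flip_def)

lemma winv_Nil [simp]: "winv [] = []"
  and winv_Cons: "winv (l # w) = winv w @ [flip l]"
  by (simp_all add: winv_def)

lemma word_disp_simps [simp]:
  "word_disp [] = 0"
  "word_disp (l # w) = disp l + word_disp w"
  "word_disp (u @ v) = word_disp u + word_disp v"
  by (simp_all add: word_disp_def)

lemma word_disp_winv [simp]: "word_disp (winv w) = - word_disp w"
  by (induction w) (simp_all add: winv_Cons)

lemma word_disp_comm_words: "w \<in> comm_words \<Longrightarrow> word_disp w = 0"
  by (induction rule: comm_words.induct) auto

lemma comm_words_cancel_winv:
  "a @ winv g @ g @ b \<in> comm_words \<Longrightarrow> a @ b \<in> comm_words"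
proof (induction g arbitrary: b)
  case (Cons l g)
  have "(a @ winv g) @ [flip l, flip (flip l)] @ (g @ b) \<in> comm_words"
    using Cons.prems by (simp add: winv_Cons)
  then have "(a @ winv g) @ (g @ b) \<in> comm_words"
    by (rule comm_words.reduce)
  then show ?case
    using Cons.IH by simp
qed simp

lemma wconj_comm_words: "g \<in> comm_words \<Longrightarrow> wconj h g \<in> comm_words"
proof -
  assume g: "g \<in> comm_words"
  have "(h @ g @ winv h @ winv g) @ g \<in> comm_words"
    by (intro comm_words.mult comm_words.commutator g)
  then have "(h @ g @ winv h) @ winv g @ g @ [] \<in> comm_words"
    by simp
  then show ?thesis
    unfolding wconj_def using comm_words_cancel_winv by fastforce
qed

lemma chain_from_append:
  "chain_from (u @ v) p e = chain_from u p e + chain_from v (p + word_disp u) e"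
  by (induction u arbitrary: p) (simp_all add: step_eq_add_disp add.assoc)

lemma chain_from_winv:
  "chain_from (winv w) (p + word_disp w) e = - chain_from w p e"
proof (induction w arbitrary: p)
  case (Cons l w)
  have "trav_edge (flip l) (step l p) = trav_edge l p" "sign_of (flip l) = - sign_of l"
    by (cases l; cases p; cases "fst l"; cases "snd l"; simp add: flip_def sign_of_def)+
  then show ?case
    using Cons.IH[of "step l p"]
    by (simp add: winv_Cons chain_from_append step_eq_add_disp add.assoc)
qed simp

lemma trav_edge_translate:
  "trav_edge l (p + q) = (fst (trav_edge l p), snd (trav_edge l p) + q)"
  by (cases l; cases p; cases q; cases "fst l"; cases "snd l") auto

lemma chain_from_translate:
  "chain_from w (p + q) (c, r + q) = chain_from w p (c, r)"
proof (induction w arbitrary: p)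
  case (Cons l w)
  show ?case
    using Cons.IH[of "step l p"]
    by (auto simp: trav_edge_translate step_eq_add_disp algebra_simps prod_eq_iff)
qed simp

lemma alpha_wconj:
  assumes "g \<in> comm_words"
  shows "alpha (wconj h g) (c, r + word_disp h) = alpha g (c, r)"
proof -
  have "alpha (wconj h g) e = chain_from g ((0, 0) + word_disp h) e" for e
    using word_disp_comm_words[OF assms] chain_from_winv[of h "(0, 0)"]
    by (simp add: alpha_def wconj_def chain_from_append)
  then show ?thesis
    using chain_from_translate[of g "(0, 0)"] by (simp add: alpha_def)
qed

lemma chain_from_support: "chain_from w p e \<noteq> 0 \<Longrightarrow> e \<in> edges_from w p"
  by (induction w arbitrary: p) (auto split: if_splits)

lemma finite_edges_from: "finite (edges_from w p)"
  by (induction w arbitrary: p) auto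

lemma sum_chain_from_X:
  assumes "finite S" "\<And>r. (Gx, r) \<in> edges_from w p \<Longrightarrow> r \<in> S"
  shows "(\<Sum>r\<in>S. chain_from w p (Gx, r)) = fst (word_disp w)"
  using assms(2)
proof (induction w arbitrary: p)
  case (Cons l w)
  have "(\<Sum>r\<in>S. if (Gx, r) = trav_edge l p then sign_of l else 0) = fst (disp l)"
    using Cons.prems assms(1)
    by (cases l; cases p; cases "fst l"; cases "snd l")
      (auto simp: disp_def sign_of_def eq_commute[of "(Gx, _)"])
  then show ?case
    using Cons by (simp add: sum.distrib)
qed simp

(* The k-th Taylor coefficient at y = 1 of the Laurent polynomial P(1, y) = \<Sum> P(i, j) y^j. *)
definition taylor_coeff_X :: "nat \<Rightarrow> (gen \<times> int \<times> int \<Rightarrow> int) \<Rightarrow> real" where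
  "taylor_coeff_X k A =
     (\<Sum>r \<in> {r. A (Gx, r) \<noteq> 0}. of_int (A (Gx, r)) * (of_int (snd r) gchoose k))"

lemma taylor_coeff_X_superset:
  assumes "finite S" "\<And>r. A (Gx, r) \<noteq> 0 \<Longrightarrow> r \<in> S"
  shows "taylor_coeff_X k A = (\<Sum>r\<in>S. of_int (A (Gx, r)) * (of_int (snd r) gchoose k))"
  unfolding taylor_coeff_X_def by (rule sum.mono_neutral_left) (use assms in auto)

lemma taylor_coeff_X_translate:
  assumes "\<And>r. A' (Gx, r + q) = A (Gx, r)"
  shows "taylor_coeff_X k A' = (\<Sum>m\<le>k. taylor_coeff_X m A * (of_int (snd q) gchoose (k - m)))"
proof -
  let ?S = "{r. A (Gx, r) \<noteq> 0}"
  have A': "A' (Gx, r) = A (Gx, r - q)" for r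
    using assms[of "r - q"] by simp
  have "{r. A' (Gx, r) \<noteq> 0} = (\<lambda>r. r + q) ` ?S"
  proof (intro set_eqI iffI)
    fix r
    assume "r \<in> {r. A' (Gx, r) \<noteq> 0}"
    then show "r \<in> (\<lambda>r. r + q) ` ?S"
      using A' by (intro image_eqI[of _ _ "r - q"]) auto
  qed (auto simp: A')
  then have "taylor_coeff_X k A' =
      (\<Sum>r\<in>?S. of_int (A (Gx, r)) * ((of_int (snd r) + of_int (snd q)) gchoose k))"
    unfolding taylor_coeff_X_def by (simp add: sum.reindex assms)
  also have "\<dots> = (\<Sum>r\<in>?S. \<Sum>m\<le>k. of_int (A (Gx, r)) *
      ((of_int (snd r) gchoose m) * (of_int (snd q) gchoose (k - m))))"
    by (simp add: gbinomial_Vandermonde [symmetric] atLeast0AtMost sum_distrib_left)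
  also have "\<dots> = (\<Sum>m\<le>k. taylor_coeff_X m A * (of_int (snd q) gchoose (k - m)))"
    by (subst sum.swap) (simp add: taylor_coeff_X_def sum_distrib_right mult.assoc)
  finally show ?thesis .
qed

lemma taylor_coeff_X_translate_eq:
  assumes "\<And>r. A' (Gx, r + q) = A (Gx, r)" and "\<And>m. m < k \<Longrightarrow> taylor_coeff_X m A = 0"
  shows "taylor_coeff_X k A' = taylor_coeff_X k A"
proof -
  have "{..k} = insert k {..<k}"
    by auto
  then show ?thesis
    using assms(2) by (simp add: taylor_coeff_X_translate[of A' q A, OF assms(1)])
qed

lemma taylor_coeff_X_0_alpha: "taylor_coeff_X 0 (alpha w) = of_int (fst (word_disp w))"
proof -
  let ?S = "snd ` edges_from w (0, 0)"
  have "finite ?S"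
    by (simp add: finite_edges_from)
  moreover have "r \<in> ?S" if "(Gx, r) \<in> edges_from w (0, 0)" for r
    using that by force
  ultimately show ?thesis
    by (simp add: taylor_coeff_X_superset[where S = ?S] alpha_def chain_from_support
        sum_chain_from_X flip: of_int_sum)
qed

lemma higher_deriv_powi_sum:
  fixes c :: "'a \<Rightarrow> real" and d :: "'a \<Rightarrow> int"
  assumes "y > 0"
  shows "(deriv ^^ k) (\<lambda>y. \<Sum>x\<in>I. c x * y powi d x) y
       = (\<Sum>x\<in>I. c x * (\<Prod>i<k. of_int (d x) - of_nat i) * y powi (d x - int k))"
  using assms
proof (induction k arbitrary: y)
  case (Suc k)
  define D where "D = (\<lambda>y::real. \<Sum>x\<in>I. c x * (\<Prod>i<k. of_int (d x) - of_nat i) * y powi (d x - int k))"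
  have "eventually (\<lambda>z. z \<in> {0<..}) (nhds y)"
    using Suc.prems by (intro eventually_nhds_in_open) auto
  then have "eventually (\<lambda>z. (deriv ^^ k) (\<lambda>y. \<Sum>x\<in>I. c x * y powi d x) z = D z) (nhds y)"
    by eventually_elim (simp add: Suc.IH D_def)
  then have "(deriv ^^ Suc k) (\<lambda>y. \<Sum>x\<in>I. c x * y powi d x) y = deriv D y"
    by (simp add: deriv_cong_ev)
  also have "\<dots> = (\<Sum>x\<in>I. c x * (\<Prod>i<k. of_int (d x) - of_nat i) *
                      (of_int (d x - int k) * y powi (d x - int k - 1)))"
    unfolding D_def using Suc.prems
    by (intro DERIV_imp_deriv) (auto intro!: derivative_eq_intros sum.cong simp: mult_ac)
  also have "\<dots> = (\<Sum>x\<in>I. c x * (\<Prod>i<Suc k. of_int (d x) - of_nat i) * y powi (d x - int (Suc k)))"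
    by (intro sum.cong refl) (simp add: algebra_simps)
  finally show ?case .
qed simp

lemma taylor_coeff_powi_sum:
  fixes c :: "'a \<Rightarrow> real" and d :: "'a \<Rightarrow> int"
  shows "(deriv ^^ k) (\<lambda>y. \<Sum>x\<in>I. c x * y powi d x) 1 / fact k = (\<Sum>x\<in>I. c x * (of_int (d x) gchoose k))"
  by (simp add: higher_deriv_powi_sum sum_divide_distrib gbinomial_prod_rev atLeast0LessThan)

lemma phi_eq_taylor_coeff_X: "phi k w = taylor_coeff_X k (alpha w)"
proof -
  let ?S = "{r. (Gx, r) \<in> edges_from w (0, 0)}"
  have "?S \<subseteq> snd ` edges_from w (0, 0)"
    by force
  then have "finite ?S"
    using finite_edges_from finite_subset by blast
  moreover have "f_poly w = (\<lambda>y. \<Sum>r\<in>?S. of_int (alpha w (Gx, r)) * y powi snd r)"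
    unfolding f_poly_def P_coeff_def by (simp add: case_prod_unfold)
  ultimately show ?thesis
    by (simp add: phi_def taylor_coeff_powi_sum taylor_coeff_X_superset alpha_def chain_from_support)
qed

lemma phi_wconj:
  assumes "g \<in> comm_words" and "\<And>m. 0 < m \<Longrightarrow> m < k \<Longrightarrow> phi m g = 0"
  shows "phi k (wconj h g) = phi k g"
proof -
  have "taylor_coeff_X m (alpha g) = 0" if "m < k" for m
    using that assms word_disp_comm_words[OF assms(1)]
    by (cases "m = 0") (simp_all add: taylor_coeff_X_0_alpha phi_eq_taylor_coeff_X)
  then show ?thesis
    using taylor_coeff_X_translate_eq[of "alpha (wconj h g)" "word_disp h" "alpha g"]
    by (simp add: phi_eq_taylor_coeff_X alpha_wconj assms(1))
qed

lemma G_set_eq: "G_set n = {g \<in> comm_words. \<forall>m. 0 < m \<and> m \<le> n \<longrightarrow> phi m g = 0}"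
  by (induction n) (auto simp: le_Suc_eq)

lemma G_set_wconj:
  assumes "g \<in> G_set n"
  shows "phi (Suc n) (wconj h g) = phi (Suc n) g \<and> wconj h g \<in> G_set n"
proof -
  have "phi m (wconj h g) = phi m g" if "m \<le> Suc n" for m
    using assms that by (intro phi_wconj) (auto simp: G_set_eq)
  then show ?thesis
    using assms by (auto simp: G_set_eq wconj_comm_words)
qed

fun swap_gen :: "gen \<Rightarrow> gen" where
  "swap_gen Gx = Gy"
| "swap_gen Gy = Gx"

definition swap_letter :: "letter \<Rightarrow> letter" where
  "swap_letter l = (swap_gen (fst l), snd l)"

definition swap_edge :: "gen \<times> int \<times> int \<Rightarrow> gen \<times> int \<times> int" where
  "swap_edge e = (swap_gen (fst e), prod.swap (snd e))"

lemma swap_gen_swap_gen [simp]: "swap_gen (swap_gen c) = c"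
  by (cases c) simp_all

lemma swap_letter_swap_letter [simp]: "swap_letter (swap_letter l) = l"
  by (simp add: swap_letter_def)

lemma swap_edge_swap_edge [simp]: "swap_edge (swap_edge e) = e"
  by (simp add: swap_edge_def)

lemma swap_edge_eq_iff [simp]: "swap_edge e = swap_edge e' \<longleftrightarrow> e = e'"
  by (metis swap_edge_swap_edge)

lemma swap_edge_image_iff: "e \<in> swap_edge ` E \<longleftrightarrow> swap_edge e \<in> E"
  by (metis image_iff swap_edge_swap_edge)

lemma flip_swap_letter: "flip (swap_letter l) = swap_letter (flip l)"
  by (simp add: flip_def swap_letter_def)

lemma map_swap_letter_map_swap_letter [simp]:
  "map swap_letter (map swap_letter w) = w"
  by (induction w) simp_all

lemma winv_map_swap_letter: "winv (map swap_letter w) = map swap_letter (winv w)"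
  by (simp add: winv_def rev_map flip_swap_letter)

lemma wconj_map_swap_letter:
  "wconj (map swap_letter h) (map swap_letter g) = map swap_letter (wconj h g)"
  by (simp add: wconj_def winv_map_swap_letter)

lemma map_swap_letter_comm_words:
  "w \<in> comm_words \<Longrightarrow> map swap_letter w \<in> comm_words"
proof (induction rule: comm_words.induct)
  case (commutator u v)
  show ?case
    using comm_words.commutator[of "map swap_letter u" "map swap_letter v"]
    by (simp add: winv_map_swap_letter)
next
  case (inv u)
  then show ?case
    using comm_words.inv by (fastforce simp: winv_map_swap_letter)
next
  case (reduce a l b)
  then show ?case
    using comm_words.reduce[of "map swap_letter a" "swap_letter l" "map swap_letter b"]
    by (simp add: flip_swap_letter)
next
  case (expand a b l)
  then show ?case
    using comm_words.expand[of "map swap_letter a" "map swap_letter b" "swap_letter l"]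
    by (simp add: flip_swap_letter)
qed (auto intro: comm_words.intros)

lemma map_swap_letter_comm_words_iff:
  "map swap_letter w \<in> comm_words \<longleftrightarrow> w \<in> comm_words"
  by (metis map_swap_letter_comm_words map_swap_letter_map_swap_letter)

lemma step_swap_letter [simp]: "step (swap_letter l) (prod.swap p) = prod.swap (step l p)"
  and trav_edge_swap_letter [simp]:
    "trav_edge (swap_letter l) (prod.swap p) = swap_edge (trav_edge l p)"
  and sign_of_swap_letter [simp]: "sign_of (swap_letter l) = sign_of l"
  by (cases l; cases p; cases "fst l"; cases "snd l";
      simp add: swap_letter_def swap_edge_def sign_of_def)+

lemma chain_from_map_swap_letter:
  "chain_from (map swap_letter w) (prod.swap p) (swap_edge e) = chain_from w p e"
proof (induction w arbitrary: p)
  case (Cons l w)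
  then show ?case
    by simp
qed simp

lemma edges_from_map_swap_letter:
  "edges_from (map swap_letter w) (prod.swap p) = swap_edge ` edges_from w p"
proof (induction w arbitrary: p)
  case (Cons l w)
  then show ?case
    by simp
qed simp

lemma g_poly_eq_f_poly_swap: "g_poly w = f_poly (map swap_letter w)"
proof (rule ext)
  fix y
  have edges: "(Gx, j, i) \<in> edges_from (map swap_letter w) (0, 0)
      \<longleftrightarrow> (Gy, i, j) \<in> edges_from w (0, 0)" for i j
    using edges_from_map_swap_letter[of w "(0, 0)"]
    by (simp only: prod.swap_def fst_conv snd_conv swap_edge_image_iff) (simp add: swap_edge_def)
  have coeffs: "P_coeff (map swap_letter w) j i = Q_coeff w i j" for i j
    using chain_from_map_swap_letter[of w "(0, 0)" "(Gy, i, j)"]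
    by (simp add: P_coeff_def Q_coeff_def alpha_def swap_edge_def)
  show "g_poly w y = f_poly (map swap_letter w) y"
    unfolding g_poly_def f_poly_def
    by (rule sum.reindex_bij_witness[of _ prod.swap prod.swap]) (auto simp: edges coeffs)
qed

lemma psi_eq_phi_swap: "psi k w = phi k (map swap_letter w)"
  by (simp add: psi_def phi_def g_poly_eq_f_poly_swap)

lemma H_set_iff_swap: "w \<in> H_set n \<longleftrightarrow> map swap_letter w \<in> G_set n"
  by (induction n) (simp_all add: map_swap_letter_comm_words_iff psi_eq_phi_swap)

theorem lemma3p3:
  fixes k :: nat
  assumes "k \<ge> 1"
  shows "(\<forall>g \<in> G_set (k - 1). \<forall>h. phi k (wconj h g) = phi k g \<and> wconj h g \<in> G_set (k - 1))
       \<and> (\<forall>g \<in> H_set (k - 1). \<forall>h. psi k (wconj h g) = psi k g \<and> wconj h g \<in> H_set (k - 1))"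
proof -
  obtain n where k: "k = Suc n"
    using assms by (cases k) auto
  have "psi k (wconj h g) = psi k g \<and> wconj h g \<in> H_set n" if "g \<in> H_set n" for g h
    using G_set_wconj[of "map swap_letter g" n "map swap_letter h"] that k
    by (simp add: psi_eq_phi_swap H_set_iff_swap wconj_map_swap_letter)
  then show ?thesis
    using G_set_wconj k by simp
qed

end
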